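(* For all integers $t,s\ge0$ and $r\ge1$, $$A_{t,s}(r)=\sum_{i=0}^{\min(t,s,r)}\binom{r+t-i}{r}\binom{r+s-i}{r}\binom{r}{i}(-1)^{i},$$ and the generating function satisfies $\sum_{t,s\ge0}A_{t,s}(r)x^ty^s=\dfrac{(1-xy)^r}{(1-x)^{r+1}(1-y)^{r+1}}$.
   Context: The numbers $A_{t,s}(r)$ (integers $t,s$, $r\ge1$) are defined by: $A_{t,s}(r)=0$ if $t<0$ or $s<0$; $A_{t,s}(1)=t+s+1$ for $t,s\ge0$; for $r\ge2$, $t,s\ge0$: $A_{t,s}(r)=\sum_{i=1}^{t}A_{t-i,s}(r-1)+\sum_{i=1}^{s}A_{t,s-i}(r-1)+A_{t,s}(r-1)$. *)

theory Defs
  imports "HOL-Analysis.Analysis"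
begin

text \<open>The numbers A_{t,s}(r), for t,s >= 0 and r >= 1. Negative indices give 0 and
only ever appear as dropped terms, so t,s are taken as naturals. The value at r = 0
is not part of the paper's definition; we set it to 0 (it is never used).\<close>

fun A :: "nat \<Rightarrow> nat \<Rightarrow> nat \<Rightarrow> int" where
  "A t s 0 = 0"
| "A t s (Suc 0) = int t + int s + 1"
| "A t s (Suc (Suc r)) =
     (\<Sum>i=1..t. A (t - i) s (Suc r)) + (\<Sum>i=1..s. A t (s - i) (Suc r)) + A t s (Suc r)"

end

(* Let F_r(x, y) be the generating series of A(r). The recursion says
   F_(r+1) = F_r * (1/(1 - y) + x/(1 - x)) = F_r * (1 - xy)/((1 - x)(1 - y)), and
   F_1 = (1 - xy)/((1 - x)(1 - y))^2, so F_r = (1 - xy)^r / ((1 - x)(1 - y))^(r+1) as formal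
   power series. Expanding (1 - xy)^r binomially gives the closed form: A_(t,s)(r) is a signed
   sum over i <= r of products of the coefficients of x^i/(1 - x)^(r+1) at x^t and of
   y^i/(1 - y)^(r+1) at y^s. For |x|, |y| < 1 these one-variable negative binomial series
   converge absolutely, so the double series is a finite sum of products of convergent series. *)

theory Submission
  imports Defs "HOL-Computational_Algebra.Formal_Power_Series"
begin

unbundle no vec_syntax
unbundle fps_syntax

lemma sum_reverse_atLeast1_atMost: "(\<Sum>i=1..n. f (n - i)) = (\<Sum>k<n. f k :: 'a::comm_monoid_add)"
  for n :: nat
  by (simp only: One_nat_def sum.atLeast1_atMost_eq sum.nat_diff_reindex)

definition fps_geometric :: "'a::comm_semiring_1 fps" where
  "fps_geometric = Abs_fps (\<lambda>_. 1)"

lemma fps_geometric_nth [simp]: "fps_geometric $ n = 1"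
  by (simp add: fps_geometric_def)

lemma fps_geometric_power_nth:
  "(fps_geometric ^ Suc m) $ n = (of_nat ((n + m) choose m) :: 'a::comm_semiring_1)"
proof (induction m arbitrary: n)
  case 0
  then show ?case by simp
next
  case (Suc m)
  have "(fps_geometric ^ Suc (Suc m)) $ n = (\<Sum>i\<le>n. of_nat ((m + i) choose m) :: 'a)"
    by (simp add: power_Suc2[of _ "Suc m"] fps_mult_nth Suc atLeast0AtMost add.commute
        del: power_Suc)
  also have "\<dots> = of_nat (\<Sum>i\<le>n. (m + i) choose m)"
    by simp
  also have "(\<Sum>i\<le>n. (m + i) choose m) = (n + Suc m) choose Suc m"
    by (metis choose_rising_sum(1) add.commute add_Suc_right Suc_eq_plus1)
  finally show ?case .
qed

text \<open>A bivariate series is an \<open>'a fps fps\<close>: the outer variable x is \<open>fps_X\<close>, the inner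
  variable y is \<open>fps_const fps_X\<close>, and the coefficient of x^t y^s of P is \<open>P $ t $ s\<close>.\<close>

definition fps_XY :: "'a::comm_ring_1 fps fps" where
  "fps_XY = fps_X * fps_const fps_X"

definition fps_geometric2 :: "'a::comm_semiring_1 fps fps" where
  "fps_geometric2 = fps_geometric * fps_const fps_geometric"

lemma fps_XY_power_mult_nth:
  "(fps_XY ^ k * P) $ t $ s = (if k \<le> t \<and> k \<le> s then P $ (t - k) $ (s - k) else 0)"
proof -
  have "fps_XY ^ k * P = fps_X ^ k * (fps_const (fps_X ^ k) * P)"
    by (simp add: fps_XY_def power_mult_distrib mult.assoc)
  then show ?thesis
    by (simp add: fps_X_power_mult_nth)
qed

lemma fps_geometric2_power_nth:
  "(fps_geometric2 ^ Suc m) $ t $ s =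
     (of_nat ((t + m) choose m) * of_nat ((s + m) choose m) :: 'a::comm_semiring_1)"
proof -
  have "fps_geometric2 ^ Suc m = fps_geometric ^ Suc m * fps_const (fps_geometric ^ Suc m :: 'a fps)"
    by (simp only: fps_geometric2_def power_mult_distrib fps_const_power)
  then show ?thesis
    by (simp only: fps_mult_right_const_nth fps_geometric_power_nth fps_of_nat[symmetric]
        fps_mult_left_const_nth)
qed

lemma fps_of_int_mult_nth_nth:
  "((of_int c :: 'a::comm_ring_1 fps fps) * P) $ t $ s = of_int c * P $ t $ s"
  by (simp flip: fps_of_int)

lemma one_minus_fps_XY_power:
  "(1 - fps_XY) ^ r = (\<Sum>k\<le>r. of_int ((-1) ^ k * int (r choose k)) * fps_XY ^ k)"
proof -
  have "(1 - fps_XY) ^ r = (- fps_XY + 1) ^ r"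
    by (simp only: diff_conv_add_uminus add.commute)
  also have "\<dots> = (\<Sum>k\<le>r. of_nat (r choose k) * (- fps_XY) ^ k * 1 ^ (r - k))"
    by (rule binomial_ring)
  also have "\<dots> = (\<Sum>k\<le>r. of_int ((-1) ^ k * int (r choose k)) * fps_XY ^ k)"
    by (intro sum.cong refl) (simp add: power_minus[of fps_XY])
  finally show ?thesis .
qed

lemma one_minus_fps_XY_power_mult_nth:
  "((1 - fps_XY) ^ r * P) $ t $ s =
     (\<Sum>k\<le>r. (-1) ^ k * of_nat (r choose k) *
        (if k \<le> t \<and> k \<le> s then P $ (t - k) $ (s - k) else 0))"
  by (simp only: one_minus_fps_XY_power sum_distrib_right fps_sum_nth mult.assoc
      fps_of_int_mult_nth_nth fps_XY_power_mult_nth) (simp add: mult.assoc)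

lemma one_minus_fps_XY_mult_geometric2:
  "(1 - fps_XY) * fps_geometric2 =
     (Abs_fps (\<lambda>t. if t = 0 then fps_geometric else 1) :: 'a::comm_ring_1 fps fps)"
proof (intro fps_ext)
  fix t s
  have "((1 - fps_XY) * fps_geometric2) $ t $ s =
        ((1 - fps_XY) ^ 1 * fps_geometric2 ^ Suc 0) $ t $ s"
    by simp
  also have "\<dots> = (if t = 0 \<or> s = 0 then 1 else 0)"
    by (simp only: one_minus_fps_XY_power_mult_nth fps_geometric2_power_nth) auto
  also have "\<dots> = Abs_fps (\<lambda>t. if t = 0 then fps_geometric else 1) $ t $ s"
    by simp
  finally show "((1 - fps_XY) * fps_geometric2) $ t $ s =
      Abs_fps (\<lambda>t. if t = 0 then fps_geometric else 1) $ t $ s" .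
qed

lemma fps_mult_one_minus_XY_geometric2_nth:
  "(P * ((1 - fps_XY) * fps_geometric2)) $ t $ s =
     (\<Sum>k<t. P $ k $ s) + (\<Sum>j\<le>s. P $ t $ j :: 'a::comm_ring_1)"
proof -
  have "(P * ((1 - fps_XY) * fps_geometric2)) $ t =
        (\<Sum>k<t. P $ k) + P $ t * fps_geometric"
    by (simp add: one_minus_fps_XY_mult_geometric2 fps_mult_nth atLeast0AtMost
        lessThan_Suc_atMost[symmetric] if_distrib sum.If_cases)
  then show ?thesis
    by (simp add: fps_mult_nth atLeast0AtMost fps_sum_nth del: sum.lessThan_Suc)
qed

definition A_fps :: "nat \<Rightarrow> int fps fps" where
  "A_fps r = Abs_fps (\<lambda>t. Abs_fps (\<lambda>s. A t s r))"

lemma A_fps_nth [simp]: "A_fps r $ t $ s = A t s r"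
  by (simp add: A_fps_def)

lemma A_fps_Suc_Suc: "A_fps (Suc (Suc r)) = A_fps (Suc r) * ((1 - fps_XY) * fps_geometric2)"
proof (intro fps_ext)
  fix t s
  have "A t s (Suc (Suc r)) =
        (\<Sum>k<t. A k s (Suc r)) + ((\<Sum>j<s. A t j (Suc r)) + A t s (Suc r))"
    by (simp only: A.simps(3) add.assoc sum_reverse_atLeast1_atMost[of "\<lambda>k. A k s (Suc r)"]
        sum_reverse_atLeast1_atMost[of "\<lambda>j. A t j (Suc r)"])
  then show "A_fps (Suc (Suc r)) $ t $ s =
      (A_fps (Suc r) * ((1 - fps_XY) * fps_geometric2)) $ t $ s"
    by (simp add: fps_mult_one_minus_XY_geometric2_nth flip: lessThan_Suc_atMost)
qed

lemma A_fps_Suc_eq: "A_fps (Suc r) = (1 - fps_XY) ^ Suc r * fps_geometric2 ^ Suc (Suc r)"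
proof (induction r)
  case 0
  show ?case
  proof (intro fps_ext)
    fix t s
    show "A_fps (Suc 0) $ t $ s =
        ((1 - fps_XY) ^ Suc 0 * fps_geometric2 ^ Suc (Suc 0)) $ t $ s"
      by (simp only: one_minus_fps_XY_power_mult_nth fps_geometric2_power_nth)
        (auto simp: algebra_simps)
  qed
next
  case (Suc r)
  show ?case by (simp only: A_fps_Suc_Suc Suc) (simp add: algebra_simps)
qed

text \<open>The coefficient of z^t in z^k / (1 - z)^(r+1).\<close>

definition shifted_binomial :: "nat \<Rightarrow> nat \<Rightarrow> nat \<Rightarrow> nat" where
  "shifted_binomial r k t = (if k \<le> t then (t - k + r) choose r else 0)"

lemma A_eq_alternating_sum:
  assumes "r \<ge> 1"
  shows "A t s r = (\<Sum>k\<le>r. (-1) ^ k * int (r choose k) *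
                      int (shifted_binomial r k t) * int (shifted_binomial r k s))"
proof -
  obtain q where r: "r = Suc q"
    using assms by (cases r) auto
  have "A t s r = A_fps r $ t $ s"
    by simp
  also have "\<dots> = ((1 - fps_XY) ^ r * fps_geometric2 ^ Suc r) $ t $ s"
    by (simp only: r A_fps_Suc_eq)
  also have "\<dots> = (\<Sum>k\<le>r. (-1) ^ k * int (r choose k) *
                      int (shifted_binomial r k t) * int (shifted_binomial r k s))"
    by (simp only: one_minus_fps_XY_power_mult_nth fps_geometric2_power_nth)
      (auto intro!: sum.cong simp: shifted_binomial_def)
  finally show ?thesis .
qed

lemma A_closed_form:
  assumes "r \<ge> 1"
  shows "A t s r = (\<Sum>i=0..min t (min s r).
           int ((r + t - i) choose r) * int ((r + s - i) choose r) * int (r choose i) * (-1) ^ i)"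
  unfolding A_eq_alternating_sum[OF assms]
  by (rule sum.mono_neutral_cong_right) (auto simp: shifted_binomial_def add.commute)

lemma has_sum_sum:
  fixes f :: "'i \<Rightarrow> 'a \<Rightarrow> 'b::topological_comm_monoid_add"
  assumes "finite I" and "\<And>i. i \<in> I \<Longrightarrow> (f i has_sum s i) S"
  shows "((\<lambda>x. \<Sum>i\<in>I. f i x) has_sum (\<Sum>i\<in>I. s i)) S"
  using assms by (induction I rule: finite_induct) (auto intro: has_sum_add)

lemma has_sum_product_real:
  fixes f :: "'a \<Rightarrow> real" and g :: "'b \<Rightarrow> real"
  assumes f: "(f has_sum a) S" and g: "(g has_sum b) T"
  shows "((\<lambda>(x, y). f x * g y) has_sum (a * b)) (S \<times> T)"
proof -
  have abs_f: "(\<lambda>x. \<bar>f x\<bar>) summable_on S"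
    and abs_g: "(\<lambda>y. \<bar>g y\<bar>) summable_on T"
    using f g summable_on_iff_abs_summable_on_real has_sum_imp_summable by fastforce+
  define G where "G = infsum (\<lambda>y. \<bar>g y\<bar>) T"
  have "(\<lambda>(x, y). \<bar>f x\<bar> * \<bar>g y\<bar>) summable_on S \<times> T" (is "?abs summable_on _")
  proof (rule summable_on_SigmaI)
    show "((\<lambda>y. case (x, y) of (x, y) \<Rightarrow> \<bar>f x\<bar> * \<bar>g y\<bar>) has_sum \<bar>f x\<bar> * G) T" for x
      using has_sum_cmult_right[OF abs_g[unfolded summable_iff_has_sum_infsum]] by (simp add: G_def)
    show "(\<lambda>x. \<bar>f x\<bar> * G) summable_on S"
      by (rule summable_on_cmult_left[OF abs_f])
  qed auto
  moreover have "(\<lambda>z. norm (case z of (x, y) \<Rightarrow> f x * g y)) = ?abs"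
    by (auto simp: abs_mult)
  ultimately have "(\<lambda>(x, y). f x * g y) summable_on S \<times> T"
    by (metis abs_summable_summable)
  moreover have "((\<lambda>y. f x * g y) has_sum f x * b) T" for x
    by (rule has_sum_cmult_right[OF g])
  moreover have "((\<lambda>x. f x * b) has_sum a * b) S"
    by (rule has_sum_cmult_left[OF f])
  ultimately show ?thesis
    by (intro has_sum_SigmaI[where g = "\<lambda>x. f x * b"]) auto
qed

lemma neg_binomial_sums:
  fixes x :: real
  assumes "\<bar>x\<bar> < 1"
  shows "(\<lambda>n. real ((n + r) choose r) * x ^ n) sums (1 / (1 - x) ^ (r + 1))"
proof -
  have coeff: "(- real (Suc r) gchoose n) * (- x) ^ n = real ((n + r) choose r) * x ^ n" for n
  proof -
    have "- real (Suc r) gchoose n = (-1) ^ n * (real (n + r) gchoose n)"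
      by (subst gbinomial_minus) (simp add: add_ac)
    also have "real (n + r) gchoose n = real ((n + r) choose r)"
      by (simp only: binomial_gbinomial[symmetric] binomial_symmetric[of r "n + r"]) simp
    finally show ?thesis
      by (simp add: power_minus[of x])
  qed
  have "(1 + - x) powr (- real (Suc r)) = 1 / (1 - x) powr real (Suc r)"
    by (simp only: diff_conv_add_uminus[symmetric] powr_minus_divide)
  also have "\<dots> = 1 / (1 - x) ^ (r + 1)"
    using assms by (subst powr_realpow) auto
  finally show ?thesis
    using gen_binomial_real[of "- x" "- real (Suc r)"] assms by (simp only: coeff)
qed

lemma shifted_binomial_has_sum:
  fixes x :: real
  assumes "\<bar>x\<bar> < 1"
  shows "((\<lambda>t. real (shifted_binomial r k t) * x ^ t) has_sum (x ^ k / (1 - x) ^ (r + 1)))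
           UNIV"
proof -
  have sums: "(\<lambda>t. real (shifted_binomial r k t) * y ^ t) sums (y ^ k / (1 - y) ^ (r + 1))"
    if "\<bar>y\<bar> < 1" for y :: real
  proof -
    have "(\<lambda>n. y ^ k * (real ((n + r) choose r) * y ^ n)) sums
        (y ^ k * (1 / (1 - y) ^ (r + 1)))"
      by (rule sums_mult[OF neg_binomial_sums[OF that]])
    then have "(\<lambda>n. real (shifted_binomial r k (n + k)) * y ^ (n + k)) sums
        (y ^ k / (1 - y) ^ (r + 1))"
      by (simp add: shifted_binomial_def power_add mult_ac)
    then show ?thesis
      by (subst (asm) sums_zero_iff_shift) (simp_all add: shifted_binomial_def)
  qed
  have "summable (\<lambda>t. norm (real (shifted_binomial r k t) * x ^ t))"
    using sums[of "\<bar>x\<bar>"] assms by (simp add: sums_iff abs_mult power_abs)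
  then show ?thesis
    by (rule norm_summable_imp_has_sum[OF _ sums[OF assms]])
qed

lemma A_generating_function:
  fixes x y :: real
  assumes "r \<ge> 1" and x: "\<bar>x\<bar> < 1" and y: "\<bar>y\<bar> < 1"
  shows "((\<lambda>(t, s). real_of_int (A t s r) * x ^ t * y ^ s) has_sum
           ((1 - x * y) ^ r / ((1 - x) ^ (r + 1) * (1 - y) ^ (r + 1)))) UNIV"
proof -
  define c where "c k = (-1) ^ k * real (r choose k)" for k
  define u where "u k z = (\<lambda>t. real (shifted_binomial r k t) * z ^ t)" for k and z :: real
  define F where "F k = (\<lambda>(t, s). c k * (u k x t * u k y s))" for k
  have "(F k has_sum c k * (x ^ k / (1 - x) ^ (r + 1) * (y ^ k / (1 - y) ^ (r + 1)))) UNIV" for k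
  proof -
    have "(u k x has_sum x ^ k / (1 - x) ^ (r + 1)) UNIV"
      and "(u k y has_sum y ^ k / (1 - y) ^ (r + 1)) UNIV"
      unfolding u_def by (intro shifted_binomial_has_sum x y)+
    from has_sum_cmult_right[OF has_sum_product_real[OF this], of "c k"] show ?thesis
      by (simp add: F_def case_prod_unfold)
  qed
  then have "((\<lambda>z. \<Sum>k\<le>r. F k z) has_sum
          (\<Sum>k\<le>r. c k * (x ^ k / (1 - x) ^ (r + 1) * (y ^ k / (1 - y) ^ (r + 1))))) UNIV"
    by (intro has_sum_sum) auto
  moreover have "(\<Sum>k\<le>r. F k (t, s)) = real_of_int (A t s r) * x ^ t * y ^ s" for t s
    by (simp add: F_def A_eq_alternating_sum[OF assms(1)] c_def u_def sum_distrib_left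
        sum_distrib_right mult_ac)
  then have "(\<lambda>z. \<Sum>k\<le>r. F k z) = (\<lambda>(t, s). real_of_int (A t s r) * x ^ t * y ^ s)"
    by auto
  moreover have "(\<Sum>k\<le>r. c k * (x ^ k / (1 - x) ^ (r + 1) * (y ^ k / (1 - y) ^ (r + 1)))) =
                 (1 - x * y) ^ r / ((1 - x) ^ (r + 1) * (1 - y) ^ (r + 1))"
  proof -
    have "(1 - x * y) ^ r = (\<Sum>k\<le>r. of_nat (r choose k) * (- (x * y)) ^ k * 1 ^ (r - k))"
      using binomial_ring[of "- (x * y)" 1 r] by simp
    then show ?thesis
      by (simp add: c_def sum_divide_distrib power_minus[of "x * y"] power_mult_distrib mult_ac)
  qed
  ultimately show ?thesis
    by simp
qed

theorem mainTheorem3: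
  fixes r :: nat
  assumes "r \<ge> 1"
  shows "(\<forall>t s. A t s r =
            (\<Sum>i=0..min t (min s r).
               int ((r + t - i) choose r) * int ((r + s - i) choose r) * int (r choose i) * (-1) ^ i))
       \<and> (\<forall>x y :: real. \<bar>x\<bar> < 1 \<longrightarrow> \<bar>y\<bar> < 1 \<longrightarrow>
            ((\<lambda>(t, s). real_of_int (A t s r) * x ^ t * y ^ s) has_sum
               ((1 - x * y) ^ r / ((1 - x) ^ (r + 1) * (1 - y) ^ (r + 1)))) UNIV)"
  using A_closed_form[OF assms] A_generating_function[OF assms] by blast

end
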